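(* Let $\mathcal H_S,\mathcal H_M$ be finite-dimensional complex Hilbert spaces and let $\Psi=\sum_{t\in D}\mu_t\,\phi_t\otimes\lambda_t$ be a unit vector in $\mathcal H_S\otimes\mathcal H_M$, with $D$ finite, unit vectors $\phi_t\in\mathcal H_S$, $\lambda_t\in\mathcal H_M$, and nonzero complex numbers $\mu_t$. (a) If the $\{\lambda_j\}_{j\in D}$ are orthonormal, then the $\{\phi_j\}_{j\in D}$ are fully distinguishable relative to $M$ (with witnessing family $b_j=\lambda_j$); explicitly $\Pr(q\mid\lambda_j)=|\langle q|\phi_j\rangle|^2$ for all unit $q\in\mathcal H_S$. (b) If the $\{\phi_j\}_{j\in D}$ are linearly independent and fully distinguishable relative to $M$, then the $\{\lambda_j\}_{j\in D}$ are orthonormal.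
   Context: For the pure joint state $\Psi$ with reduced states $\rho_S=\mathrm{Tr}_M|\Psi\rangle\langle\Psi|$, $\rho_M=\mathrm{Tr}_S|\Psi\rangle\langle\Psi|$, and unit vectors $q\in\mathcal H_S$, $b\in\mathcal H_M$: $\Pr(b)=\langle b|\rho_M|b\rangle$, $\Pr(q\wedge b)=|\langle q\otimes b|\Psi\rangle|^2$, $\Pr(q\mid b)=\Pr(q\wedge b)/\Pr(b)$ when $\Pr(b)>0$. The family $\{\phi_j\}_{j\in D}$ is fully distinguishable relative to $M$ iff there exists an orthonormal family $\{b_j\}_{j\in D}$ in $\mathcal H_M$ which is probability-complete, i.e. $\sum_{j\in D}\Pr(b_j)=1$, with $\Pr(b_j)>0$ and $\Pr(q\mid b_j)=|\langle q|\phi_j\rangle|^2$ for every $j\in D$ and every unit vector $q\in\mathcal H_S$. *)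

theory Defs
  imports "HOL-Analysis.Analysis"
begin

text \<open>Finite-dimensional complex Hilbert spaces are modelled concretely as
  complex coordinate spaces: H_S = complex^'s, H_M = complex^'m, and the tensor
  product H_S (x) H_M = complex^('s x 'm).\<close>

definition cinner :: "complex ^ 'n::finite \<Rightarrow> complex ^ 'n::finite \<Rightarrow> complex" where
  "cinner u v = (\<Sum>i\<in>UNIV. cnj (u $ i) * v $ i)"

definition unit_vec :: "complex ^ 'n::finite \<Rightarrow> bool" where
  "unit_vec v \<longleftrightarrow> cinner v v = 1"

definition tensor :: "complex ^ 's \<Rightarrow> complex ^ 'm \<Rightarrow> complex ^ ('s::finite \<times> 'm::finite)" where
  "tensor x y = (\<chi> p. x $ fst p * y $ snd p)"

definition orthonormal_on :: "'d set \<Rightarrow> ('d \<Rightarrow> complex ^ 'n::finite) \<Rightarrow> bool" where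
  "orthonormal_on D b \<longleftrightarrow> (\<forall>i\<in>D. \<forall>j\<in>D. cinner (b i) (b j) = (if i = j then 1 else 0))"

definition lin_indep_on :: "'d set \<Rightarrow> ('d \<Rightarrow> complex ^ 'n::finite) \<Rightarrow> bool" where
  "lin_indep_on D f \<longleftrightarrow>
     (\<forall>c. (\<Sum>j\<in>D. c j *s f j) = 0 \<longrightarrow> (\<forall>j\<in>D. c j = 0))"

text \<open>Reduced state on M: rho_M = Tr_S |Psi><Psi|.\<close>
definition rho_M :: "complex ^ ('s::finite \<times> 'm::finite) \<Rightarrow> complex ^ 'm ^ 'm" where
  "rho_M \<Psi> = (\<chi> j k. \<Sum>i\<in>(UNIV::'s set). \<Psi> $ (i, j) * cnj (\<Psi> $ (i, k)))"

text \<open>Pr(b) = <b|rho_M|b> (a real number, since rho_M is Hermitian).\<close>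
definition Pr_M :: "complex ^ ('s::finite \<times> 'm::finite) \<Rightarrow> complex ^ 'm \<Rightarrow> real" where
  "Pr_M \<Psi> b = Re (cinner b (rho_M \<Psi> *v b))"

definition Pr_joint :: "complex ^ ('s::finite \<times> 'm::finite) \<Rightarrow> complex ^ 's \<Rightarrow> complex ^ 'm \<Rightarrow> real" where
  "Pr_joint \<Psi> q b = (cmod (cinner (tensor q b) \<Psi>))\<^sup>2"

text \<open>Pr(q | b) = Pr(q and b) / Pr(b) (used only when Pr(b) > 0).\<close>
definition Pr_cond :: "complex ^ ('s::finite \<times> 'm::finite) \<Rightarrow> complex ^ 's \<Rightarrow> complex ^ 'm \<Rightarrow> real" where
  "Pr_cond \<Psi> q b = Pr_joint \<Psi> q b / Pr_M \<Psi> b"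

definition fd_witness ::
  "complex ^ ('s::finite \<times> 'm::finite) \<Rightarrow> 'd set \<Rightarrow> ('d \<Rightarrow> complex ^ 's) \<Rightarrow> ('d \<Rightarrow> complex ^ 'm) \<Rightarrow> bool" where
  "fd_witness \<Psi> D \<phi> b \<longleftrightarrow>
     orthonormal_on D b \<and>
     (\<Sum>j\<in>D. Pr_M \<Psi> (b j)) = 1 \<and>
     (\<forall>j\<in>D. Pr_M \<Psi> (b j) > 0 \<and>
        (\<forall>q. unit_vec q \<longrightarrow> Pr_cond \<Psi> q (b j) = (cmod (cinner q (\<phi> j)))\<^sup>2))"

definition fully_distinguishable ::
  "complex ^ ('s::finite \<times> 'm::finite) \<Rightarrow> 'd set \<Rightarrow> ('d \<Rightarrow> complex ^ 's) \<Rightarrow> ('m::finite) itself \<Rightarrow> bool" where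
  "fully_distinguishable \<Psi> D \<phi> _ \<longleftrightarrow> (\<exists>b :: 'd \<Rightarrow> complex ^ 'm. fd_witness \<Psi> D \<phi> b)"

end

theory Submission
  imports Defs
begin

text \<open>Write \<open>\<langle>b|\<^sub>M \<Psi>\<close> for the vector of H_S obtained by taking the inner
  product with b in the M factor only (\<open>partial_cinner\<close>); then
  \<open>Pr(b) = \<parallel>\<langle>b|\<^sub>M \<Psi>\<parallel>\<^sup>2\<close> and \<open>Pr(q \<and> b) = |\<langle>q|\<langle>b|\<^sub>M \<Psi>\<rangle>|\<^sup>2\<close>.

  (a) For orthonormal lam, \<open>\<langle>lam\<^sub>j|\<^sub>M \<Psi> = \<mu>\<^sub>j \<phi>\<^sub>j\<close>, which gives all the
  required probabilities at once.

  (b) Since \<open>Pr(q | b\<^sub>j) = 0\<close> for every q orthogonal to \<open>\<phi>\<^sub>j\<close>, the slice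
  \<open>\<langle>b\<^sub>j|\<^sub>M \<Psi>\<close> is a multiple \<open>c\<^sub>j \<phi>\<^sub>j\<close>.  Probability-completeness says that
  these slices carry the whole norm of \<open>\<Psi>\<close>, so equality in Bessel's inequality yields
  \<open>\<Psi> = \<Sum>\<^sub>j c\<^sub>j \<phi>\<^sub>j \<otimes> b\<^sub>j\<close>.  Comparing with \<open>\<Psi> = \<Sum>\<^sub>j \<mu>\<^sub>j \<phi>\<^sub>j \<otimes> lam\<^sub>j\<close>,
  linear independence of the \<open>\<phi>\<^sub>j\<close> gives \<open>\<mu>\<^sub>j lam\<^sub>j = c\<^sub>j b\<^sub>j\<close>, so the
  lam_j inherit orthogonality from the b_j.\<close>

lemma cinner_sum_left: "cinner (sum f D) v = (\<Sum>t\<in>D. cinner (f t) v)"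
  unfolding cinner_def by (simp add: sum_component cnj_sum sum_distrib_right) (rule sum.swap)

lemma cinner_smult_left: "cinner (c *s u) v = cnj c * cinner u v"
  unfolding cinner_def by (simp add: sum_distrib_left mult_ac)

lemma cinner_smult_right: "cinner u (c *s v) = c * cinner u v"
  unfolding cinner_def by (simp add: sum_distrib_left mult_ac)

lemma cinner_diff_left: "cinner (u - v) w = cinner u w - cinner v w"
  unfolding cinner_def by (simp add: algebra_simps sum_subtractf)

lemma cinner_diff_right: "cinner u (v - w) = cinner u v - cinner u w"
  unfolding cinner_def by (simp add: algebra_simps sum_subtractf)

lemma cnj_cinner: "cnj (cinner u v) = cinner v u"
  unfolding cinner_def by (simp add: cnj_sum mult_ac)

lemma cnj_mult_self: "cnj z * z = of_real ((cmod z)\<^sup>2)"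
  by (subst complex_norm_square) (rule mult.commute)

lemma cinner_self: "cinner v v = of_real (\<Sum>i\<in>UNIV. (cmod (v $ i))\<^sup>2)"
  unfolding cinner_def of_real_sum by (simp only: cnj_mult_self)

lemma of_real_Re_cinner_self: "of_real (Re (cinner v v)) = cinner v v"
  by (simp add: cinner_self)

lemma cinner_self_eq_0_iff: "cinner v v = 0 \<longleftrightarrow> v = 0"
proof
  assume "cinner v v = 0"
  then have "(\<Sum>i\<in>UNIV. (cmod (v $ i))\<^sup>2) = 0"
    by (simp only: cinner_self of_real_eq_0_iff)
  then show "v = 0"
    by (simp add: sum_nonneg_eq_0_iff vec_eq_iff)
qed (simp add: cinner_def)

lemma cinner_axis_left: "cinner (axis k 1) v = v $ k"
proof -
  have "cinner (axis k 1) v = (\<Sum>i\<in>UNIV. if i = k then v $ i else 0)"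
    unfolding cinner_def axis_def by (intro sum.cong) auto
  then show ?thesis
    by simp
qed

lemma ex_unit_vec_smult:
  assumes "v \<noteq> 0"
  shows "\<exists>c. c \<noteq> 0 \<and> unit_vec (c *s v)"
proof -
  define n where "n = (\<Sum>i\<in>UNIV. (cmod (v $ i))\<^sup>2)"
  have "n \<ge> 0"
    unfolding n_def by (simp add: sum_nonneg)
  moreover have v_v: "cinner v v = of_real n"
    by (simp only: cinner_self n_def)
  then have "n \<noteq> 0"
    using assms cinner_self_eq_0_iff[of v] by auto
  ultimately have "n > 0"
    by simp
  then have "unit_vec (of_real (1 / sqrt n) *s v)"
    unfolding unit_vec_def cinner_smult_left cinner_smult_right v_v
    by (simp flip: of_real_mult)
  then show ?thesis
    using \<open>n > 0\<close> by (intro exI[of _ "of_real (1 / sqrt n)"]) simp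
qed

lemma eq_smult_if_orthogonal_to_perp:
  assumes "unit_vec \<phi>"
    and perp: "\<And>q. unit_vec q \<Longrightarrow> cinner q \<phi> = 0 \<Longrightarrow> cinner q v = 0"
  shows "v = cinner \<phi> v *s \<phi>"
proof (rule ccontr)
  define w where "w = v - cinner \<phi> v *s \<phi>"
  assume "v \<noteq> cinner \<phi> v *s \<phi>"
  then have "w \<noteq> 0"
    by (simp add: w_def)
  then obtain c where "c \<noteq> 0" and unit: "unit_vec (c *s w)"
    using ex_unit_vec_smult by blast
  have "cinner \<phi> w = 0"
    using assms(1) by (simp add: w_def unit_vec_def cinner_diff_right cinner_smult_right)
  then have "cinner w \<phi> = 0"
    by (metis cnj_cinner complex_cnj_zero)
  then have "cinner (c *s w) v = 0"
    using perp[OF unit] by (simp add: cinner_smult_left)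
  moreover have "cinner w v = cinner w w"
    using \<open>cinner w \<phi> = 0\<close> by (simp add: w_def cinner_diff_right cinner_smult_right)
  ultimately have "cinner w w = 0"
    using \<open>c \<noteq> 0\<close> by (simp add: cinner_smult_left)
  with \<open>w \<noteq> 0\<close> show False
    by (simp add: cinner_self_eq_0_iff)
qed

lemma tensor_smult_left: "tensor (c *s a) b = c *s tensor a b"
  unfolding tensor_def by (simp add: vec_eq_iff mult_ac)

lemma tensor_smult_right: "tensor a (c *s b) = c *s tensor a b"
  unfolding tensor_def by (simp add: vec_eq_iff mult_ac)

lemma tensor_diff_right: "tensor a (b - b') = tensor a b - tensor a b'"
  unfolding tensor_def by (simp add: vec_eq_iff algebra_simps)

definition partial_cinner :: "complex ^ 'm \<Rightarrow> complex ^ ('s::finite \<times> 'm::finite) \<Rightarrow> complex ^ 's"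
  where "partial_cinner b X = (\<chi> i. \<Sum>k\<in>UNIV. cnj (b $ k) * X $ (i, k))"

lemma cinner_tensor_left: "cinner (tensor q b) X = cinner q (partial_cinner b X)"
proof -
  have sum_pairs: "(\<Sum>p\<in>UNIV. f p) = (\<Sum>i\<in>UNIV. \<Sum>k\<in>UNIV. f (i, k))"
    for f :: "'a \<times> 'b \<Rightarrow> complex"
    by (simp add: sum.cartesian_product)
  show ?thesis
    unfolding cinner_def tensor_def partial_cinner_def sum_pairs
    by (simp add: sum_distrib_left mult_ac)
qed

lemma cinner_rho_M: "cinner b (rho_M X *v b) = cinner (partial_cinner b X) (partial_cinner b X)"
proof -
  have "cinner b (rho_M X *v b) =
      (\<Sum>j\<in>UNIV. \<Sum>k\<in>UNIV. \<Sum>i\<in>UNIV. cnj (b $ j) * b $ k * X $ (i, j) * cnj (X $ (i, k)))"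
    unfolding cinner_def rho_M_def matrix_vector_mult_def
    by (simp add: sum_distrib_left sum_distrib_right mult_ac)
  also have "\<dots> = (\<Sum>i\<in>UNIV. \<Sum>j\<in>UNIV. \<Sum>k\<in>UNIV. cnj (b $ j) * b $ k * X $ (i, j) * cnj (X $ (i, k)))"
    by (rule trans[OF sum.cong[OF refl sum.swap] sum.swap])
  also have "\<dots> = cinner (partial_cinner b X) (partial_cinner b X)"
    unfolding cinner_def partial_cinner_def
    by (simp add: cnj_sum sum_distrib_left sum_distrib_right mult_ac)
  finally show ?thesis .
qed

lemma Pr_M_eq: "Pr_M X b = Re (cinner (partial_cinner b X) (partial_cinner b X))"
  by (simp add: Pr_M_def cinner_rho_M)

lemma Pr_joint_eq: "Pr_joint X q b = (cmod (cinner q (partial_cinner b X)))\<^sup>2"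
  by (simp add: Pr_joint_def cinner_tensor_left)

lemma partial_cinner_sum: "partial_cinner b (sum f D) = (\<Sum>t\<in>D. partial_cinner b (f t))"
  unfolding partial_cinner_def
  by (simp add: vec_eq_iff sum_component sum_distrib_left) (rule allI, rule sum.swap)

lemma partial_cinner_tensor: "partial_cinner b (tensor a c) = cinner b c *s a"
  unfolding partial_cinner_def tensor_def cinner_def
  by (simp add: vec_eq_iff sum_distrib_left mult_ac)

lemma cinner_sum_tensor_left:
  "cinner (\<Sum>t\<in>D. tensor (a t) (b t)) X = (\<Sum>t\<in>D. cinner (a t) (partial_cinner (b t) X))"
  by (simp add: cinner_sum_left cinner_tensor_left)

lemma partial_cinner_sum_tensor_orthonormal:
  assumes "finite D" "orthonormal_on D b" "j \<in> D"
  shows "partial_cinner (b j) (\<Sum>t\<in>D. tensor (a t) (b t)) = a j"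
proof -
  have "partial_cinner (b j) (\<Sum>t\<in>D. tensor (a t) (b t)) = (\<Sum>t\<in>D. cinner (b j) (b t) *s a t)"
    by (simp add: partial_cinner_sum partial_cinner_tensor)
  also have "\<dots> = (\<Sum>t\<in>D. if t = j then a j else 0)"
    using assms(2,3) unfolding orthonormal_on_def by (intro sum.cong) auto
  finally show ?thesis
    using assms(1,3) by simp
qed

lemma sum_tensor_eq_0_imp_eq_0:
  assumes "lin_indep_on D \<phi>" "(\<Sum>t\<in>D. tensor (\<phi> t) (z t)) = 0" "t \<in> D"
  shows "z t = 0"
proof -
  have "z t $ k = 0" for k
  proof -
    have "(\<Sum>s\<in>D. z s $ k *s \<phi> s) = partial_cinner (axis k 1) (\<Sum>s\<in>D. tensor (\<phi> s) (z s))"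
      by (simp add: partial_cinner_sum partial_cinner_tensor cinner_axis_left)
    then have "(\<Sum>s\<in>D. z s $ k *s \<phi> s) = 0"
      using assms(2) by (simp add: partial_cinner_def vec_eq_iff)
    then show ?thesis
      using assms(1,3) unfolding lin_indep_on_def by (auto dest: spec[of _ "\<lambda>s. z s $ k"])
  qed
  then show ?thesis
    by (simp add: vec_eq_iff)
qed

lemma sum_tensor_cancel_left:
  assumes "lin_indep_on D \<phi>"
    and "(\<Sum>t\<in>D. tensor (\<phi> t) (x t)) = (\<Sum>t\<in>D. tensor (\<phi> t) (y t))" "t \<in> D"
  shows "x t = y t"
  using sum_tensor_eq_0_imp_eq_0[OF assms(1) _ assms(3), of "\<lambda>t. x t - y t"] assms(2)
  by (simp add: tensor_diff_right sum_subtractf)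

lemma eq_sum_tensor_partial_cinner:
  assumes "finite D" "orthonormal_on D b"
    and norm: "(\<Sum>j\<in>D. cinner (partial_cinner (b j) X) (partial_cinner (b j) X)) = cinner X X"
  shows "X = (\<Sum>j\<in>D. tensor (partial_cinner (b j) X) (b j))"
proof -
  define T where "T = (\<Sum>j\<in>D. tensor (partial_cinner (b j) X) (b j))"
  have partial_T: "partial_cinner (b j) T = partial_cinner (b j) X" if "j \<in> D" for j
    unfolding T_def using assms(1,2) that by (rule partial_cinner_sum_tensor_orthonormal)
  have T_X: "cinner T X = cinner X X"
    unfolding T_def cinner_sum_tensor_left by (rule norm)
  then have X_T: "cinner X T = cinner X X"
    by (metis cnj_cinner)
  have "cinner T T = (\<Sum>j\<in>D. cinner (partial_cinner (b j) X) (partial_cinner (b j) T))"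
    by (subst (1) T_def) (rule cinner_sum_tensor_left)
  also have "\<dots> = cinner X X"
    by (simp add: partial_T norm)
  finally have "cinner (X - T) (X - T) = 0"
    by (simp add: cinner_diff_left cinner_diff_right T_X X_T)
  then show ?thesis
    by (simp add: cinner_self_eq_0_iff T_def)
qed

lemma fd_witness_if_orthonormal:
  assumes "finite D"
    and unit_\<phi>: "\<And>t. t \<in> D \<Longrightarrow> unit_vec (\<phi> t)"
    and "\<And>t. t \<in> D \<Longrightarrow> \<mu> t \<noteq> 0"
    and "orthonormal_on D lam"
    and unit_\<Psi>: "unit_vec (\<Sum>t\<in>D. \<mu> t *s tensor (\<phi> t) (lam t))"
  shows "fd_witness (\<Sum>t\<in>D. \<mu> t *s tensor (\<phi> t) (lam t)) D \<phi> lam"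
proof -
  define \<Psi> where "\<Psi> = (\<Sum>t\<in>D. tensor (\<mu> t *s \<phi> t) (lam t))"
  have \<Psi>_eq: "(\<Sum>t\<in>D. \<mu> t *s tensor (\<phi> t) (lam t)) = \<Psi>"
    by (simp add: \<Psi>_def tensor_smult_left)
  have partial: "partial_cinner (lam j) \<Psi> = \<mu> j *s \<phi> j" if "j \<in> D" for j
    unfolding \<Psi>_def using assms(1,4) that by (rule partial_cinner_sum_tensor_orthonormal)
  have norm_partial: "cinner (partial_cinner (lam j) \<Psi>) (partial_cinner (lam j) \<Psi>) =
      of_real ((cmod (\<mu> j))\<^sup>2)" if "j \<in> D" for j
    using unit_\<phi>[OF that]
    by (simp add: partial[OF that] cinner_smult_left cinner_smult_right unit_vec_def
        complex_norm_square flip: of_real_power)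
  have Pr_M: "Pr_M \<Psi> (lam j) = (cmod (\<mu> j))\<^sup>2" if "j \<in> D" for j
    by (simp add: Pr_M_eq norm_partial[OF that])
  have "cinner \<Psi> \<Psi> = (\<Sum>j\<in>D. cinner (\<mu> j *s \<phi> j) (partial_cinner (lam j) \<Psi>))"
    by (subst (1) \<Psi>_def) (rule cinner_sum_tensor_left)
  then have "(\<Sum>j\<in>D. Pr_M \<Psi> (lam j)) = Re (cinner \<Psi> \<Psi>)"
    by (simp add: Pr_M_eq partial)
  also have "\<dots> = 1"
    using unit_\<Psi> by (simp add: \<Psi>_eq unit_vec_def)
  finally have "(\<Sum>j\<in>D. Pr_M \<Psi> (lam j)) = 1" .
  moreover have "Pr_cond \<Psi> q (lam j) = (cmod (cinner q (\<phi> j)))\<^sup>2" if "j \<in> D" for j q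
    using assms(3)[OF that]
    by (simp add: Pr_cond_def Pr_joint_eq Pr_M[OF that] partial[OF that] cinner_smult_right
        norm_mult power_mult_distrib)
  ultimately show ?thesis
    unfolding \<Psi>_eq fd_witness_def using assms(3,4) Pr_M by auto
qed

lemma partial_cinner_eq_smult_if_Pr_cond:
  assumes "unit_vec \<phi>" "Pr_M X b > 0"
    and "\<And>q. unit_vec q \<Longrightarrow> Pr_cond X q b = (cmod (cinner q \<phi>))\<^sup>2"
  shows "partial_cinner b X = cinner \<phi> (partial_cinner b X) *s \<phi>"
proof (rule eq_smult_if_orthogonal_to_perp[OF assms(1)])
  fix q :: "complex ^ 'a"
  assume "unit_vec q" "cinner q \<phi> = 0"
  then have "Pr_joint X q b = 0"
    using assms(2) assms(3)[OF \<open>unit_vec q\<close>] by (simp add: Pr_cond_def)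
  then show "cinner q (partial_cinner b X) = 0"
    by (simp add: Pr_joint_eq)
qed

lemma orthonormal_on_if_parallel:
  assumes "orthonormal_on D b"
    and "\<And>t. t \<in> D \<Longrightarrow> unit_vec (x t)"
    and "\<And>t. t \<in> D \<Longrightarrow> \<mu> t \<noteq> 0"
    and "\<And>t. t \<in> D \<Longrightarrow> \<mu> t *s x t = c t *s b t"
  shows "orthonormal_on D x"
  unfolding orthonormal_on_def
proof (intro ballI)
  fix s t assume "s \<in> D" "t \<in> D"
  have x_eq: "x u = (c u / \<mu> u) *s b u" if "u \<in> D" for u
    using assms(3,4)[OF that] by (simp add: vec_eq_iff field_simps)
  show "cinner (x s) (x t) = (if s = t then 1 else 0)"
  proof (cases "s = t")
    case True
    then show ?thesis
      using assms(2) \<open>t \<in> D\<close> by (simp add: unit_vec_def)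
  next
    case False
    then have "cinner (b s) (b t) = 0"
      using assms(1) \<open>s \<in> D\<close> \<open>t \<in> D\<close> unfolding orthonormal_on_def by auto
    then show ?thesis
      using False by (simp add: x_eq \<open>s \<in> D\<close> \<open>t \<in> D\<close> cinner_smult_left cinner_smult_right)
  qed
qed

lemma orthonormal_if_fd_witness:
  assumes "finite D"
    and unit_\<phi>: "\<And>t. t \<in> D \<Longrightarrow> unit_vec (\<phi> t)"
    and unit_lam: "\<And>t. t \<in> D \<Longrightarrow> unit_vec (lam t)"
    and \<mu>: "\<And>t. t \<in> D \<Longrightarrow> \<mu> t \<noteq> 0"
    and \<Psi>: "\<Psi> = (\<Sum>t\<in>D. \<mu> t *s tensor (\<phi> t) (lam t))"
    and unit_\<Psi>: "unit_vec \<Psi>"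
    and indep: "lin_indep_on D \<phi>"
    and "fd_witness \<Psi> D \<phi> b"
  shows "orthonormal_on D lam"
proof -
  define v where "v j = partial_cinner (b j) \<Psi>" for j
  have orth_b: "orthonormal_on D b" and "(\<Sum>j\<in>D. Pr_M \<Psi> (b j)) = 1"
    using \<open>fd_witness \<Psi> D \<phi> b\<close> unfolding fd_witness_def by auto
  have "(\<Sum>j\<in>D. cinner (v j) (v j)) = of_real (\<Sum>j\<in>D. Pr_M \<Psi> (b j))"
    by (simp add: v_def Pr_M_eq of_real_Re_cinner_self)
  also have "\<dots> = cinner \<Psi> \<Psi>"
    using \<open>(\<Sum>j\<in>D. Pr_M \<Psi> (b j)) = 1\<close> unit_\<Psi> by (simp add: unit_vec_def)
  finally have "(\<Sum>j\<in>D. cinner (v j) (v j)) = cinner \<Psi> \<Psi>" .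
  then have "\<Psi> = (\<Sum>j\<in>D. tensor (v j) (b j))"
    unfolding v_def using eq_sum_tensor_partial_cinner[OF assms(1) orth_b] by blast
  also have "\<dots> = (\<Sum>j\<in>D. tensor (\<phi> j) (cinner (\<phi> j) (v j) *s b j))"
  proof (intro sum.cong refl)
    fix j assume "j \<in> D"
    then have "v j = cinner (\<phi> j) (v j) *s \<phi> j"
      unfolding v_def using \<open>fd_witness \<Psi> D \<phi> b\<close> unit_\<phi>
      by (intro partial_cinner_eq_smult_if_Pr_cond) (auto simp: fd_witness_def)
    then show "tensor (v j) (b j) = tensor (\<phi> j) (cinner (\<phi> j) (v j) *s b j)"
      by (metis tensor_smult_left tensor_smult_right)
  qed
  finally have "(\<Sum>t\<in>D. tensor (\<phi> t) (\<mu> t *s lam t)) =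
      (\<Sum>j\<in>D. tensor (\<phi> j) (cinner (\<phi> j) (v j) *s b j))"
    by (simp add: \<Psi> tensor_smult_right)
  then show ?thesis
  proof (intro orthonormal_on_if_parallel[OF orth_b unit_lam \<mu>])
    fix t assume "t \<in> D"
    with \<open>(\<Sum>t\<in>D. tensor (\<phi> t) (\<mu> t *s lam t)) = _\<close>
    show "\<mu> t *s lam t = cinner (\<phi> t) (v t) *s b t"
      by (rule sum_tensor_cancel_left[OF indep])
  qed
qed

theorem lemmaA3:
  fixes \<Psi> :: "complex ^ ('s::finite \<times> 'm::finite)"
    and D :: "'d set"
    and \<phi> :: "'d \<Rightarrow> complex ^ 's"
    and lam :: "'d \<Rightarrow> complex ^ 'm"
    and \<mu> :: "'d \<Rightarrow> complex"
  assumes "finite D"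
    and "\<And>t. t \<in> D \<Longrightarrow> unit_vec (\<phi> t)"
    and "\<And>t. t \<in> D \<Longrightarrow> unit_vec (lam t)"
    and "\<And>t. t \<in> D \<Longrightarrow> \<mu> t \<noteq> 0"
    and "\<Psi> = (\<Sum>t\<in>D. \<mu> t *s tensor (\<phi> t) (lam t))"
    and "unit_vec \<Psi>"
  shows "(orthonormal_on D lam \<longrightarrow>
            fd_witness \<Psi> D \<phi> lam \<and> fully_distinguishable \<Psi> D \<phi> TYPE('m) \<and>
            (\<forall>j\<in>D. \<forall>q. unit_vec q \<longrightarrow> Pr_cond \<Psi> q (lam j) = (cmod (cinner q (\<phi> j)))\<^sup>2))
       \<and> (lin_indep_on D \<phi> \<and> fully_distinguishable \<Psi> D \<phi> TYPE('m) \<longrightarrow> orthonormal_on D lam)"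
proof (intro conjI impI)
  assume "orthonormal_on D lam"
  then have "fd_witness \<Psi> D \<phi> lam"
    using fd_witness_if_orthonormal[of D \<phi> \<mu> lam] assms by simp
  then show "fd_witness \<Psi> D \<phi> lam" "fully_distinguishable \<Psi> D \<phi> TYPE('m)"
    "\<forall>j\<in>D. \<forall>q. unit_vec q \<longrightarrow> Pr_cond \<Psi> q (lam j) = (cmod (cinner q (\<phi> j)))\<^sup>2"
    unfolding fully_distinguishable_def fd_witness_def by blast+
next
  assume "lin_indep_on D \<phi> \<and> fully_distinguishable \<Psi> D \<phi> TYPE('m)"
  then show "orthonormal_on D lam"
    unfolding fully_distinguishable_def using orthonormal_if_fd_witness[OF assms] by blast
qed

end
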